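(* Consider a weakly monotone MP-MFG whose rewards $r^i(x,a,\cdot)$ are continuously differentiable in the distribution argument. Let $(\rho_t)_{t\ge 1}$ be a trajectory of continuous-time fictitious play, and let $\pi_t$ be the associated policies. Assume $t\mapsto\phi(\pi_t)$ is differentiable on $[1,\infty)$. Then for all $t\ge 1$, $$\frac{d}{dt}\phi(\pi_t)\le-\frac1t\,\phi(\pi_t).$$ Consequently $\phi(\pi_t)\le\phi(\pi_1)/t$, so $\phi(\pi_t)=O(1/t)$.
   Context: A multi-population mean field game (MP-MFG) consists of the following data: - a finite state space $\mathcal X$ and a finite action space $\mathcal A$; - $N_p\ge1$ populations and a horizon $N$, with time steps $n=0,\dots,N$; - initial distributions $\mu^i_0\in\Delta\mathcal X$; - a transition kernel $p(x'|x,a)$ independent of the distributions; - rewards $r^i:\mathcal X\times\mathcal A\times(\Delta\mathcal X)^{N_p}\to\mathbb R$. A policy of population $i$ is $\pi^i=(\pi^i_n)_{n=0}^N$ with $\pi^i_n(\cdot|x)\in\Delta\mathcal A$, and $\pi=(\pi^i)_i$. The induced distributions are defined by $\mu^{i,\pi^i}_0=\mu^i_0$ and $\mu^{i,\pi^i}_{n+1}(x')=\sum_{x,a}\pi^i_n(a|x)\,p(x'|x,a)\,\mu^{i,\pi^i}_n(x)$, with $\mu^\pi=(\mu^{i,\pi^i})_i$. The induced state-action distributions are $\rho^{i,\pi^i}_n(x,a)=\mu^{i,\pi^i}_n(x)\,\pi^i_n(a|x)$. The total reward is $$J^i(\pi^i,\mu)=\sum_{n=0}^N\sum_{x,a}\mu^{i,\pi^i}_n(x)\,\pi^i_n(a|x)\,r^i(x,a,\mu_n),\qquad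 \mu_n=(\mu^1_n,\dots,\mu^{N_p}_n).$$ The exploitability is $$\phi(\pi)=\sum_i\Big[\max_{\pi'^i}J^i(\pi'^i,\mu^\pi)-J^i(\pi^i,\mu^\pi)\Big].$$ The game is weakly monotone if the following holds for all families $\rho^i,\rho'^i\in\Delta(\mathcal X\times\mathcal A)$. Let the $x$-marginals be $\mu^i,\mu'^i$, with $\mu=(\mu^i)_i$ and $\mu'=(\mu'^i)_i$. Then $$\sum_i\sum_{x,a}\big(\rho^i(x,a)-\rho'^i(x,a)\big)\big(r^i(x,a,\mu)-r^i(x,a,\mu')\big)\le0.$$ Continuous-time fictitious play is defined as follows. - For $s\in[0,1)$, $\rho^{i,br}_{n,s}$ is the state-action distribution induced by the uniform policy. - For $t\ge 1$, set $$\rho^i_{n,t}=\frac1t\int_0^t\rho^{i,br}_{n,s}\,ds,\qquad \mu^i_{n,t}(x)=\sum_a\rho^i_{n,t}(x,a),\qquad \mu_t=(\mu^i_{n,t})_{i,n}.$$ - For $t\ge 1$, $\rho^{i,br}_{n,t}$ is the state-action distribution $\rho^{i,\pi^{i,br}_t}_n$ induced by a best response policy $\pi^{i,br}_t\in\arg\max_{\pi^i}J^i(\pi^i,\mu_t)$, chosen measurably in $t$. - The associated policy is $\pi^i_{n,t}(a|x)=\rho^i_{n,t}(x,a)/\mu^i_{n,t}(x)$ when $\mu^i_{n,t}(x)>0$, and arbitrary otherwise. With this choice, $\mu^{\pi_t}=\mu_t$. *)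

theory Defs
  imports "HOL-Analysis.Analysis"
begin

definition is_dist :: "('b::finite \<Rightarrow> real) \<Rightarrow> bool" where
  "is_dist d \<longleftrightarrow> (\<forall>y. 0 \<le> d y) \<and> sum d UNIV = 1"

definition is_policy :: "nat \<Rightarrow> (nat \<Rightarrow> 'x::finite \<Rightarrow> 'a::finite \<Rightarrow> real) \<Rightarrow> bool" where
  "is_policy N pol \<longleftrightarrow> (\<forall>n\<le>N. \<forall>x. is_dist (pol n x))"

text \<open>Induced state distribution; P x a x' is the transition probability p(x'|x,a).\<close>
fun state_dist :: "('x::finite \<Rightarrow> real) \<Rightarrow> ('x \<Rightarrow> 'a::finite \<Rightarrow> 'x \<Rightarrow> real)
    \<Rightarrow> (nat \<Rightarrow> 'x \<Rightarrow> 'a \<Rightarrow> real) \<Rightarrow> nat \<Rightarrow> 'x \<Rightarrow> real" where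
  "state_dist m0 P pol 0 = m0"
| "state_dist m0 P pol (Suc n) =
     (\<lambda>x'. \<Sum>x\<in>UNIV. \<Sum>a\<in>UNIV. pol n x a * P x a x' * state_dist m0 P pol n x)"

definition sa_dist :: "('x::finite \<Rightarrow> real) \<Rightarrow> ('x \<Rightarrow> 'a::finite \<Rightarrow> 'x \<Rightarrow> real)
    \<Rightarrow> (nat \<Rightarrow> 'x \<Rightarrow> 'a \<Rightarrow> real) \<Rightarrow> nat \<Rightarrow> 'x \<Rightarrow> 'a \<Rightarrow> real" where
  "sa_dist m0 P pol n x a = state_dist m0 P pol n x * pol n x a"

text \<open>Total reward J^i(pol, mu) of one population with initial distribution m0 and reward R = r^i;
  mu j n is the distribution of population j at time n.\<close>
definition J :: "nat \<Rightarrow> ('x::finite \<Rightarrow> real) \<Rightarrow> ('x \<Rightarrow> 'a::finite \<Rightarrow> 'x \<Rightarrow> real)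
    \<Rightarrow> ('x \<Rightarrow> 'a \<Rightarrow> ('p \<Rightarrow> 'x \<Rightarrow> real) \<Rightarrow> real)
    \<Rightarrow> (nat \<Rightarrow> 'x \<Rightarrow> 'a \<Rightarrow> real) \<Rightarrow> ('p \<Rightarrow> nat \<Rightarrow> 'x \<Rightarrow> real) \<Rightarrow> real" where
  "J N m0 P R pol mu =
     (\<Sum>n\<le>N. \<Sum>x\<in>UNIV. \<Sum>a\<in>UNIV. state_dist m0 P pol n x * pol n x a * R x a (\<lambda>j. mu j n))"

definition induced :: "('p \<Rightarrow> 'x::finite \<Rightarrow> real) \<Rightarrow> ('x \<Rightarrow> 'a::finite \<Rightarrow> 'x \<Rightarrow> real)
    \<Rightarrow> ('p \<Rightarrow> nat \<Rightarrow> 'x \<Rightarrow> 'a \<Rightarrow> real) \<Rightarrow> 'p \<Rightarrow> nat \<Rightarrow> 'x \<Rightarrow> real" where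
  "induced mu0 P pl = (\<lambda>i. state_dist (mu0 i) P (pl i))"

definition exploitability :: "nat \<Rightarrow> ('p::finite \<Rightarrow> 'x::finite \<Rightarrow> real) \<Rightarrow> ('x \<Rightarrow> 'a::finite \<Rightarrow> 'x \<Rightarrow> real)
    \<Rightarrow> ('p \<Rightarrow> 'x \<Rightarrow> 'a \<Rightarrow> ('p \<Rightarrow> 'x \<Rightarrow> real) \<Rightarrow> real)
    \<Rightarrow> ('p \<Rightarrow> nat \<Rightarrow> 'x \<Rightarrow> 'a \<Rightarrow> real) \<Rightarrow> real" where
  "exploitability N mu0 P r pl =
     (\<Sum>i\<in>UNIV. Sup {J N (mu0 i) P (r i) pol' (induced mu0 P pl) | pol'. is_policy N pol'}
                 - J N (mu0 i) P (r i) (pl i) (induced mu0 P pl))"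

definition weakly_monotone :: "('p::finite \<Rightarrow> 'x::finite \<Rightarrow> 'a::finite \<Rightarrow> ('p \<Rightarrow> 'x \<Rightarrow> real) \<Rightarrow> real) \<Rightarrow> bool" where
  "weakly_monotone r \<longleftrightarrow>
     (\<forall>\<rho> \<rho>' :: 'p \<Rightarrow> 'x \<Rightarrow> 'a \<Rightarrow> real.
        (\<forall>i. is_dist (\<lambda>(x, a). \<rho> i x a)) \<longrightarrow> (\<forall>i. is_dist (\<lambda>(x, a). \<rho>' i x a)) \<longrightarrow>
        (\<Sum>i\<in>UNIV. \<Sum>x\<in>UNIV. \<Sum>a\<in>UNIV. (\<rho> i x a - \<rho>' i x a) *
            (r i x a (\<lambda>j y. \<Sum>b\<in>UNIV. \<rho> j y b) - r i x a (\<lambda>j y. \<Sum>b\<in>UNIV. \<rho>' j y b))) \<le> 0)"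

text \<open>Identification of distribution profiles with Euclidean vectors, for differentiability.\<close>
definition vec_to_fun :: "real ^ 'x ^ 'p \<Rightarrow> 'p \<Rightarrow> 'x \<Rightarrow> real" where
  "vec_to_fun m = (\<lambda>j y. m $ j $ y)"

definition simplex_profiles :: "(real ^ 'x::finite ^ 'p::finite) set" where
  "simplex_profiles = {m. \<forall>j. is_dist (\<lambda>y. m $ j $ y)}"

definition C1_on :: "('n::euclidean_space \<Rightarrow> real) \<Rightarrow> 'n set \<Rightarrow> bool" where
  "C1_on f S \<longleftrightarrow> (\<exists>g. continuous_on S g \<and>
       (\<forall>m\<in>S. (f has_derivative (\<lambda>h. g m \<bullet> h)) (at m within S)))"

text \<open>Fictitious play: averaged state-action distributions rho_t and marginals mu_t,
  generated by the best-response policies pibr s (uniform for s in [0,1)).\<close>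
definition fp_rho :: "('p \<Rightarrow> 'x::finite \<Rightarrow> real) \<Rightarrow> ('x \<Rightarrow> 'a::finite \<Rightarrow> 'x \<Rightarrow> real)
    \<Rightarrow> (real \<Rightarrow> 'p \<Rightarrow> nat \<Rightarrow> 'x \<Rightarrow> 'a \<Rightarrow> real) \<Rightarrow> real \<Rightarrow> 'p \<Rightarrow> nat \<Rightarrow> 'x \<Rightarrow> 'a \<Rightarrow> real" where
  "fp_rho mu0 P pibr t i n x a = (1 / t) * integral {0..t} (\<lambda>s. sa_dist (mu0 i) P (pibr s i) n x a)"

definition fp_mu :: "('p \<Rightarrow> 'x::finite \<Rightarrow> real) \<Rightarrow> ('x \<Rightarrow> 'a::finite \<Rightarrow> 'x \<Rightarrow> real)
    \<Rightarrow> (real \<Rightarrow> 'p \<Rightarrow> nat \<Rightarrow> 'x \<Rightarrow> 'a \<Rightarrow> real) \<Rightarrow> real \<Rightarrow> 'p \<Rightarrow> nat \<Rightarrow> 'x \<Rightarrow> real" where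
  "fp_mu mu0 P pibr t i n x = (\<Sum>a\<in>UNIV. fp_rho mu0 P pibr t i n x a)"

end

(*
  Identify policies with the state-action occupation measures they induce. Fictitious play
  moves rho_t towards the best responses at rate 1/t: for s < t,
  rho_t = rho_s + ((t - s)/t) (A_{s,t} - rho_s), with A_{s,t} the average best-response
  occupation over [s, t]. Let L be a limit point of A_{t-h,t} as h -> 0; by continuity of the
  rewards, L is a best response against mu_t. Bounding phi(pi_s) from below by letting every
  population play L, the left difference quotients of phi at t are asymptotically at most
    (1/t) sum (L - rho_t) Dr(mu_t) (mu^L - mu_t) - (1/t) phi(pi_t),
  and the first term is nonpositive by weak monotonicity, differentiated along the segment
  from rho_t to L. Hence phi' <= -phi/t, i.e. t phi(pi_t) is non-increasing.
*)

theory Submission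
  imports Defs
begin

definition is_occupation :: "nat \<Rightarrow> ('x::finite \<Rightarrow> real) \<Rightarrow> ('x \<Rightarrow> 'a::finite \<Rightarrow> 'x \<Rightarrow> real)
    \<Rightarrow> (nat \<Rightarrow> 'x \<Rightarrow> 'a \<Rightarrow> real) \<Rightarrow> bool" where
  "is_occupation N m0 P R \<longleftrightarrow> (\<forall>n\<le>N. \<forall>x a. 0 \<le> R n x a) \<and> (\<forall>x. (\<Sum>a\<in>UNIV. R 0 x a) = m0 x) \<and>
     (\<forall>n<N. \<forall>x'. (\<Sum>a\<in>UNIV. R (Suc n) x' a) = (\<Sum>x\<in>UNIV. \<Sum>a\<in>UNIV. R n x a * P x a x'))"

lemma state_dist_is_dist:
  assumes m0: "is_dist m0" and P: "\<forall>x a. is_dist (P x a)" and pl: "is_policy N pl" and n: "n \<le> N"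
  shows "is_dist (state_dist m0 P pl n)"
  using n
proof (induction n)
  case 0 then show ?case using m0 by simp
next
  case (Suc n)
  then have IH: "is_dist (state_dist m0 P pl n)" by simp
  have pn: "\<And>x. is_dist (pl n x)" using pl Suc.prems unfolding is_policy_def by auto
  have "sum (state_dist m0 P pl (Suc n)) UNIV
      = (\<Sum>x'\<in>UNIV. \<Sum>x\<in>UNIV. \<Sum>a\<in>UNIV. pl n x a * P x a x' * state_dist m0 P pl n x)"
    by simp
  also have "\<dots> = (\<Sum>x\<in>UNIV. \<Sum>a\<in>UNIV. \<Sum>x'\<in>UNIV. pl n x a * P x a x' * state_dist m0 P pl n x)"
    by (subst sum.swap) (rule sum.cong[OF refl], rule sum.swap)
  also have "\<dots> = (\<Sum>x\<in>UNIV. \<Sum>a\<in>UNIV. pl n x a * state_dist m0 P pl n x * (\<Sum>x'\<in>UNIV. P x a x'))"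
    by (simp add: sum_distrib_left sum_distrib_right mult_ac)
  also have "\<dots> = (\<Sum>x\<in>UNIV. state_dist m0 P pl n x * (\<Sum>a\<in>UNIV. pl n x a))"
    using P unfolding is_dist_def by (simp add: sum_distrib_left sum_distrib_right mult.commute)
  also have "\<dots> = 1" using pn IH unfolding is_dist_def by simp
  finally show ?case using IH pn P unfolding is_dist_def by (auto intro!: sum_nonneg)
qed

lemma sa_dist_is_occupation:
  assumes m0: "is_dist m0" and P: "\<forall>x a. is_dist (P x a)" and pl: "is_policy N pl"
  shows "is_occupation N m0 P (sa_dist m0 P pl)"
proof -
  have pd: "\<And>n x. n \<le> N \<Longrightarrow> is_dist (pl n x)" using pl unfolding is_policy_def by auto
  have marg: "(\<Sum>a\<in>UNIV. sa_dist m0 P pl n x a) = state_dist m0 P pl n x" if "n \<le> N" for n x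
    using pd[OF that] unfolding sa_dist_def is_dist_def by (simp flip: sum_distrib_left)
  show ?thesis unfolding is_occupation_def
  proof (intro conjI allI impI)
    fix n x a assume "n \<le> N"
    then show "0 \<le> sa_dist m0 P pl n x a"
      using state_dist_is_dist[OF m0 P pl] pd unfolding sa_dist_def is_dist_def by simp
  next
    fix x show "(\<Sum>a\<in>UNIV. sa_dist m0 P pl 0 x a) = m0 x" using marg[of 0] by simp
  next
    fix n x' assume "n < N"
    then have "(\<Sum>a\<in>UNIV. sa_dist m0 P pl (Suc n) x' a) = state_dist m0 P pl (Suc n) x'"
      using marg by simp
    also have "\<dots> = (\<Sum>x\<in>UNIV. \<Sum>a\<in>UNIV. sa_dist m0 P pl n x a * P x a x')"
      unfolding sa_dist_def by (simp add: mult_ac)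
    finally show "(\<Sum>a\<in>UNIV. sa_dist m0 P pl (Suc n) x' a)
        = (\<Sum>x\<in>UNIV. \<Sum>a\<in>UNIV. sa_dist m0 P pl n x a * P x a x')" .
  qed
qed

lemma sa_dist_conditional_policy:
  assumes R: "is_occupation N m0 P R"
    and cond: "\<forall>n\<le>N. \<forall>x a. (\<Sum>b\<in>UNIV. R n x b) > 0 \<longrightarrow> pl n x a = R n x a / (\<Sum>b\<in>UNIV. R n x b)"
    and n: "n \<le> N"
  shows "state_dist m0 P pl n x = (\<Sum>b\<in>UNIV. R n x b)" and "sa_dist m0 P pl n x a = R n x a"
proof -
  have sa: "sa_dist m0 P pl n x a = R n x a"
    if n: "n \<le> N" and marg: "state_dist m0 P pl n x = (\<Sum>b\<in>UNIV. R n x b)" for n x a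
  proof (cases "(\<Sum>b\<in>UNIV. R n x b) > 0")
    case True then show ?thesis using cond n marg unfolding sa_dist_def by simp
  next
    case False
    have nn: "\<forall>b. 0 \<le> R n x b" using R n unfolding is_occupation_def by simp
    then have z: "(\<Sum>b\<in>UNIV. R n x b) = 0"
      using False by (meson sum_nonneg not_less order.antisym)
    then have "R n x a = 0" using nn by (simp add: sum_nonneg_eq_0_iff)
    then show ?thesis using marg z unfolding sa_dist_def by simp
  qed
  have marg: "state_dist m0 P pl n x = (\<Sum>b\<in>UNIV. R n x b)" if "n \<le> N" for n x
    using that
  proof (induction n arbitrary: x)
    case 0 then show ?case using R unfolding is_occupation_def by simp
  next
    case (Suc n)
    have "state_dist m0 P pl (Suc n) x = (\<Sum>y\<in>UNIV. \<Sum>a\<in>UNIV. sa_dist m0 P pl n y a * P y a x)"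
      unfolding sa_dist_def by (simp add: mult_ac)
    also have "\<dots> = (\<Sum>y\<in>UNIV. \<Sum>a\<in>UNIV. R n y a * P y a x)"
      using Suc sa by simp
    also have "\<dots> = (\<Sum>b\<in>UNIV. R (Suc n) x b)"
      using R Suc.prems unfolding is_occupation_def by simp
    finally show ?case .
  qed
  show "state_dist m0 P pl n x = (\<Sum>b\<in>UNIV. R n x b)" using marg[OF n] .
  show "sa_dist m0 P pl n x a = R n x a" using sa[OF n marg[OF n]] .
qed

lemma occupation_realizable:
  assumes R: "is_occupation N m0 P R"
  obtains pl where "is_policy N pl" and "\<forall>n\<le>N. \<forall>x a. sa_dist m0 P pl n x a = R n x a"
proof
  define pl where "pl n x a = (if (\<Sum>b\<in>UNIV. R n x b) > 0 then R n x a / (\<Sum>b\<in>UNIV. R n x b)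
      else 1 / real CARD('b))" for n x and a :: 'b
  show "is_policy N pl"
    unfolding is_policy_def
  proof (intro allI impI)
    fix n x assume "n \<le> N"
    then show "is_dist (pl n x)"
      using R unfolding is_dist_def pl_def is_occupation_def
      by (cases "(\<Sum>b\<in>UNIV. R n x b) > 0") (auto simp flip: sum_divide_distrib)
  qed
  show "\<forall>n\<le>N. \<forall>x a. sa_dist m0 P pl n x a = R n x a"
    using sa_dist_conditional_policy(2)[OF R] unfolding pl_def by simp
qed

lemma occupation_sum_eq_1:
  assumes R: "is_occupation N m0 P R" and m0: "is_dist m0" and P: "\<forall>x a. is_dist (P x a)"
    and n: "n \<le> N"
  shows "(\<Sum>x\<in>UNIV. \<Sum>a\<in>UNIV. R n x a) = 1"
proof -
  obtain pl where pl: "is_policy N pl" "\<forall>n\<le>N. \<forall>x a. sa_dist m0 P pl n x a = R n x a"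
    using occupation_realizable[OF R] by blast
  have "(\<Sum>x\<in>UNIV. \<Sum>a\<in>UNIV. R n x a) = (\<Sum>x\<in>UNIV. state_dist m0 P pl n x * (\<Sum>a\<in>UNIV. pl n x a))"
    using pl(2) n unfolding sa_dist_def by (simp add: sum_distrib_left)
  also have "\<dots> = 1"
    using state_dist_is_dist[OF m0 P pl(1) n] pl(1) n unfolding is_dist_def is_policy_def by simp
  finally show ?thesis .
qed

lemma occupation_bounded:
  assumes R: "is_occupation N m0 P R" and m0: "is_dist m0" and P: "\<forall>x a. is_dist (P x a)"
    and n: "n \<le> N"
  shows "0 \<le> R n x a" and "R n x a \<le> 1"
proof -
  have nn: "\<forall>y b. 0 \<le> R n y b" using R n unfolding is_occupation_def by simp
  then show "0 \<le> R n x a" by simp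
  have "R n x a \<le> (\<Sum>b\<in>UNIV. R n x b)"
    using nn by (intro member_le_sum) auto
  also have "\<dots> \<le> (\<Sum>y\<in>UNIV. \<Sum>b\<in>UNIV. R n y b)"
    using nn by (intro member_le_sum) (auto intro: sum_nonneg)
  finally show "R n x a \<le> 1" using occupation_sum_eq_1[OF R m0 P n] by simp
qed

lemma occupation_is_dist:
  assumes R: "is_occupation N m0 P R" and m0: "is_dist m0" and P: "\<forall>x a. is_dist (P x a)"
    and n: "n \<le> N"
  shows "is_dist (\<lambda>(x, a). R n x a)"
  using occupation_sum_eq_1[OF assms] R n unfolding is_dist_def is_occupation_def
  by (auto simp: UNIV_Times_UNIV[symmetric] sum.cartesian_product[symmetric] simp del: UNIV_Times_UNIV)

lemma is_occupation_limit:
  assumes R: "\<forall>k. is_occupation N m0 P (Rk k)"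
    and lim: "\<forall>n\<le>N. \<forall>x a. (\<lambda>k. Rk k n x a) \<longlonglongrightarrow> R n x a"
  shows "is_occupation N m0 P R"
  unfolding is_occupation_def
proof (intro conjI allI impI)
  fix n x a assume n: "n \<le> N"
  have "\<forall>k. 0 \<le> Rk k n x a" using R n unfolding is_occupation_def by blast
  moreover have "(\<lambda>k. Rk k n x a) \<longlonglongrightarrow> R n x a" using lim n by blast
  ultimately show "0 \<le> R n x a" using LIMSEQ_le_const by blast
next
  fix x
  have "(\<lambda>k. \<Sum>a\<in>UNIV. Rk k 0 x a) \<longlonglongrightarrow> (\<Sum>a\<in>UNIV. R 0 x a)"
    using lim by (intro tendsto_sum) auto
  moreover have "(\<lambda>k. \<Sum>a\<in>UNIV. Rk k 0 x a) = (\<lambda>k. m0 x)"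
    using R unfolding is_occupation_def by auto
  ultimately have "(\<lambda>k. m0 x) \<longlonglongrightarrow> (\<Sum>a\<in>UNIV. R 0 x a)" by simp
  from LIMSEQ_unique[OF this tendsto_const] show "(\<Sum>a\<in>UNIV. R 0 x a) = m0 x" by simp
next
  fix n x' assume n: "n < N"
  have "(\<lambda>k. \<Sum>a\<in>UNIV. Rk k (Suc n) x' a) \<longlonglongrightarrow> (\<Sum>a\<in>UNIV. R (Suc n) x' a)"
    using lim n by (intro tendsto_sum) auto
  moreover have "(\<lambda>k. \<Sum>a\<in>UNIV. Rk k (Suc n) x' a) \<longlonglongrightarrow> (\<Sum>x\<in>UNIV. \<Sum>a\<in>UNIV. R n x a * P x a x')"
  proof -
    have "(\<lambda>k. \<Sum>x\<in>UNIV. \<Sum>a\<in>UNIV. Rk k n x a * P x a x')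
        \<longlonglongrightarrow> (\<Sum>x\<in>UNIV. \<Sum>a\<in>UNIV. R n x a * P x a x')"
      using lim n by (intro tendsto_sum tendsto_mult tendsto_const) auto
    moreover have "(\<lambda>k. \<Sum>a\<in>UNIV. Rk k (Suc n) x' a) = (\<lambda>k. \<Sum>x\<in>UNIV. \<Sum>a\<in>UNIV. Rk k n x a * P x a x')"
      using R n unfolding is_occupation_def by auto
    ultimately show ?thesis by simp
  qed
  ultimately show "(\<Sum>a\<in>UNIV. R (Suc n) x' a) = (\<Sum>x\<in>UNIV. \<Sum>a\<in>UNIV. R n x a * P x a x')"
    by (rule LIMSEQ_unique)
qed

lemma J_eq_sa_dist:
  "J N m0 P rew pl mu = (\<Sum>n\<le>N. \<Sum>x\<in>UNIV. \<Sum>a\<in>UNIV. sa_dist m0 P pl n x a * rew x a (\<lambda>j. mu j n))"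
  unfolding J_def sa_dist_def by simp

lemma integral_average_is_occupation:
  assumes uv: "u < v"
    and R: "\<forall>s\<in>{u..v}. is_occupation N m0 P (Rs s)"
    and int: "\<forall>n\<le>N. \<forall>x a. (\<lambda>s. Rs s n x a) integrable_on {u..v}"
  shows "is_occupation N m0 P (\<lambda>n x a. (1 / (v - u)) * integral {u..v} (\<lambda>s. Rs s n x a))"
proof -
  have avg_sum: "(\<Sum>a\<in>UNIV. (1 / (v - u)) * integral {u..v} (\<lambda>s. Rs s n x a))
      = (1 / (v - u)) * integral {u..v} (\<lambda>s. \<Sum>a\<in>UNIV. Rs s n x a)" if "n \<le> N" for n x
    using int that by (simp add: sum_distrib_left integral_sum)
  have avg_const: "(1 / (v - u)) * integral {u..v} (\<lambda>s. f s) = c"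
    if "\<forall>s\<in>{u..v}. f s = c" for f c
    using uv integral_cong[of "{u..v}" f "\<lambda>_. c"] that by simp
  show ?thesis unfolding is_occupation_def
  proof (intro conjI allI impI)
    fix n x a assume n: "n \<le> N"
    show "0 \<le> (1 / (v - u)) * integral {u..v} (\<lambda>s. Rs s n x a)"
      using uv R int n unfolding is_occupation_def
      by (intro mult_nonneg_nonneg integral_nonneg) auto
  next
    fix x
    show "(\<Sum>a\<in>UNIV. (1 / (v - u)) * integral {u..v} (\<lambda>s. Rs s 0 x a)) = m0 x"
      using R unfolding avg_sum[OF le0] is_occupation_def by (intro avg_const) auto
  next
    fix n x' assume n: "n < N"
    have int_n: "(\<lambda>s. Rs s n x a * P x a x') integrable_on {u..v}" for x a
      using int n by (intro integrable_on_mult_left) simp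
    have "(\<Sum>a\<in>UNIV. (1 / (v - u)) * integral {u..v} (\<lambda>s. Rs s (Suc n) x' a))
        = (1 / (v - u)) * integral {u..v} (\<lambda>s. \<Sum>x\<in>UNIV. \<Sum>a\<in>UNIV. Rs s n x a * P x a x')"
      using R n unfolding avg_sum[OF Suc_leI[OF n]] is_occupation_def
      by (intro arg_cong[where f="\<lambda>I. (1 / (v - u)) * I"] integral_cong) auto
    also have "\<dots> = (\<Sum>x\<in>UNIV. \<Sum>a\<in>UNIV. (1 / (v - u)) * integral {u..v} (\<lambda>s. Rs s n x a) * P x a x')"
      using int_n by (simp add: integral_sum integrable_sum integral_mult_left sum_distrib_left mult_ac)
    finally show "(\<Sum>a\<in>UNIV. (1 / (v - u)) * integral {u..v} (\<lambda>s. Rs s (Suc n) x' a))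
        = (\<Sum>x\<in>UNIV. \<Sum>a\<in>UNIV. (1 / (v - u)) * integral {u..v} (\<lambda>s. Rs s n x a) * P x a x')" .
  qed
qed

lemma is_dist_convex_comb:
  assumes f: "is_dist f" and g: "is_dist g" and e: "0 \<le> e" "e \<le> 1"
  shows "is_dist (\<lambda>y. f y + e * (g y - f y))"
proof -
  have eq: "f y + e * (g y - f y) = (1 - e) * f y + e * g y" for y by (simp add: algebra_simps)
  have "sum (\<lambda>y. (1 - e) * f y + e * g y) UNIV = (1 - e) * sum f UNIV + e * sum g UNIV"
    by (simp add: sum.distrib sum_distrib_left)
  then show ?thesis
    using f g e unfolding is_dist_def eq by (simp add: add_nonneg_nonneg mult_nonneg_nonneg)
qed

lemma is_dist_marginal:
  assumes "is_dist (\<lambda>(x, a). R x a)"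
  shows "is_dist (\<lambda>x. \<Sum>a\<in>UNIV. R x a)"
  using assms unfolding is_dist_def
  by (auto simp: UNIV_Times_UNIV[symmetric] sum.cartesian_product[symmetric] intro: sum_nonneg
      simp del: UNIV_Times_UNIV)

definition profile_vec :: "('p::finite \<Rightarrow> 'x::finite \<Rightarrow> real) \<Rightarrow> real ^ 'x ^ 'p" where
  "profile_vec f = (\<chi> j y. f j y)"

lemma vec_to_fun_profile_vec [simp]: "vec_to_fun (profile_vec f) = f"
  unfolding vec_to_fun_def profile_vec_def by (simp add: vec_lambda_inverse)

lemma profile_vec_in_simplex_profiles: "(\<forall>j. is_dist (f j)) \<Longrightarrow> profile_vec f \<in> simplex_profiles"
  unfolding simplex_profiles_def profile_vec_def by (simp add: vec_lambda_inverse)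

lemma finite_family_convergent_subseq:
  fixes f :: "nat \<Rightarrow> 'i \<Rightarrow> real"
  assumes "finite S" and "\<forall>k. \<forall>j\<in>S. \<bar>f k j\<bar> \<le> B"
  obtains \<sigma> l where "strict_mono \<sigma>" and "\<forall>j\<in>S. (\<lambda>k. f (\<sigma> k) j) \<longlonglongrightarrow> l j"
proof -
  have "\<exists>\<sigma> l. strict_mono \<sigma> \<and> (\<forall>j\<in>S. (\<lambda>k. f (\<sigma> k) j) \<longlonglongrightarrow> l j)"
    using assms
  proof (induction S arbitrary: f rule: finite_induct)
    case empty
    then show ?case by (intro exI[of _ id] exI[of _ "\<lambda>_. 0"]) (simp add: strict_mono_def)
  next
    case (insert j0 S)
    then obtain \<sigma>1 l where s1: "strict_mono \<sigma>1" "\<forall>j\<in>S. (\<lambda>k. f (\<sigma>1 k) j) \<longlonglongrightarrow> l j" by blast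
    have "bounded (range (\<lambda>k. f (\<sigma>1 k) j0))"
      using insert.prems by (intro boundedI[where B=B]) auto
    then obtain l0 \<sigma>2 where s2: "strict_mono \<sigma>2" "((\<lambda>k. f (\<sigma>1 k) j0) \<circ> \<sigma>2) \<longlonglongrightarrow> l0"
      using bounded_imp_convergent_subsequence by blast
    have "(\<lambda>k. f ((\<sigma>1 \<circ> \<sigma>2) k) j) \<longlonglongrightarrow> (l(j0 := l0)) j" if j: "j \<in> insert j0 S" for j
    proof (cases "j = j0")
      case True then show ?thesis using s2(2) by (simp add: o_def)
    next
      case False
      then have "((\<lambda>k. f (\<sigma>1 k) j) \<circ> \<sigma>2) \<longlonglongrightarrow> l j"
        using j s1(2) s2(1) LIMSEQ_subseq_LIMSEQ by blast
      then show ?thesis using False by (simp add: o_def)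
    qed
    moreover have "strict_mono (\<sigma>1 \<circ> \<sigma>2)" using s1(1) s2(1) by (simp add: strict_mono_def)
    ultimately show ?case by blast
  qed
  then show ?thesis using that by blast
qed

lemma has_derivative_within_quotient_tendsto:
  fixes f :: "'n::euclidean_space \<Rightarrow> real"
  assumes d: "(f has_derivative (\<lambda>h. G \<bullet> h)) (at x within S)"
    and yS: "\<forall>k. y k \<in> S" and c_pos: "\<forall>k. c k > 0" and c0: "c \<longlonglongrightarrow> 0"
    and q: "(\<lambda>k. (x - y k) /\<^sub>R c k) \<longlonglongrightarrow> w"
  shows "(\<lambda>k. (f x - f (y k)) / c k) \<longlonglongrightarrow> G \<bullet> w"
proof -
  define E where "E y = f y - f x - G \<bullet> (y - x)" for y
  have eq: "(f x - f (y k)) / c k = G \<bullet> ((x - y k) /\<^sub>R c k) - E (y k) / c k" for k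
    using c_pos[rule_format, of k] unfolding E_def
    by (simp add: inner_diff_right field_simps inner_commute)
  have yx: "(\<lambda>k. y k - x) \<longlonglongrightarrow> 0"
  proof -
    have "(\<lambda>k. - (c k *\<^sub>R ((x - y k) /\<^sub>R c k))) \<longlonglongrightarrow> - (0 *\<^sub>R w)"
      by (intro tendsto_intros c0 q)
    moreover have "- (c k *\<^sub>R ((x - y k) /\<^sub>R c k)) = y k - x" for k
      using c_pos[rule_format, of k] by simp
    ultimately show ?thesis by simp
  qed
  have nq: "(\<lambda>k. norm ((x - y k) /\<^sub>R c k)) \<longlonglongrightarrow> norm w" by (intro tendsto_intros q)
  have "(\<lambda>k. E (y k) / c k) \<longlonglongrightarrow> 0"
  proof (rule LIMSEQ_I)
    fix e :: real assume e: "0 < e"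
    define e' where "e' = e / (norm w + 2)"
    have nw: "0 < norm w + 2" using norm_ge_zero[of w] by linarith
    have e': "0 < e'" using e nw unfolding e'_def by (rule divide_pos_pos)
    obtain d where d: "d > 0" "\<forall>y\<in>S. norm (y - x) < d \<longrightarrow> \<bar>E y\<bar> \<le> e' * norm (y - x)"
      using d e' unfolding has_derivative_within_alt E_def by auto
    obtain k1 where k1: "\<forall>k\<ge>k1. norm (y k - x - 0) < d" using yx d(1) LIMSEQ_D by blast
    obtain k2 where k2: "\<forall>k\<ge>k2. norm (norm ((x - y k) /\<^sub>R c k) - norm w) < 1"
      using nq LIMSEQ_D[of _ "norm w" 1] by force
    show "\<exists>k0. \<forall>k\<ge>k0. norm (E (y k) / c k - 0) < e"
    proof (intro exI allI impI)
      fix k assume k: "max k1 k2 \<le> k"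
      have ck: "c k > 0" using c_pos by simp
      have "\<bar>E (y k)\<bar> \<le> e' * norm (y k - x)" using d(2) yS k1 k by auto
      moreover have "norm (y k - x) = c k * norm ((x - y k) /\<^sub>R c k)"
        using ck by (simp add: norm_minus_commute)
      moreover have "norm ((x - y k) /\<^sub>R c k) < norm w + 1" using k2 k by auto
      ultimately have "\<bar>E (y k)\<bar> \<le> e' * (c k * (norm w + 1))"
        by (smt (verit) e' ck mult_left_mono mult_pos_pos)
      then have "\<bar>E (y k) / c k\<bar> \<le> e' * (norm w + 1)"
        using ck by (simp add: abs_div pos_divide_le_eq mult_ac)
      also have "\<dots> < e" unfolding e'_def using e nw by (simp add: field_simps)
      finally show "norm (E (y k) / c k - 0) < e" by simp
    qed
  qed
  then have "(\<lambda>k. G \<bullet> ((x - y k) /\<^sub>R c k) - E (y k) / c k) \<longlonglongrightarrow> G \<bullet> w - 0"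
    by (intro tendsto_intros q)
  then show ?thesis using eq by simp
qed

lemma mult_antimono_of_deriv_bound:
  fixes f :: "real \<Rightarrow> real"
  assumes a: "0 \<le> a" and diff: "f differentiable_on {a..}"
    and bound: "\<And>s D. a < s \<Longrightarrow> (f has_real_derivative D) (at s within {a..}) \<Longrightarrow> D \<le> - (1 / s) * f s"
    and uv: "a \<le> u" "u \<le> v"
  shows "v * f v \<le> u * f u"
proof (rule DERIV_nonpos_imp_decreasing_open[OF uv(2)])
  fix s assume s: "u < s" "s < v"
  then have as: "a < s" using uv by simp
  then obtain D where D: "(f has_real_derivative D) (at s within {a..})"
    using diff unfolding differentiable_on_def real_differentiable_def by fastforce
  have "at s within {a..} = at s" using as by (intro at_within_interior) simp
  then have "((\<lambda>s. s * f s) has_real_derivative (1 * f s + D * s)) (at s)"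
    using D by (intro DERIV_mult DERIV_ident) simp
  moreover have "s * D \<le> s * (- (1 / s) * f s)"
    using bound[OF as D] as a by (intro mult_left_mono) auto
  then have "1 * f s + D * s \<le> 0" using as a by (simp add: mult.commute)
  ultimately show "\<exists>y. ((\<lambda>s. s * f s) has_real_derivative y) (at s) \<and> y \<le> 0" by blast
next
  have "continuous_on {u..v} f"
    using continuous_on_subset[OF differentiable_imp_continuous_on[OF diff]] uv by auto
  then show "continuous_on {u..v} (\<lambda>s. s * f s)" by (intro continuous_intros)
qed

lemma deriv_bound_at_left_endpoint:
  fixes f :: "real \<Rightarrow> real"
  assumes a: "0 < a" and anti: "\<And>v. a \<le> v \<Longrightarrow> v * f v \<le> a * f a"
    and D: "(f has_real_derivative D) (at a within {a..})"
  shows "D \<le> - (1 / a) * f a"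
proof -
  have "((\<lambda>s. s * f s) has_real_derivative (1 * f a + D * a)) (at a within {a..})"
    by (rule DERIV_mult[OF DERIV_ident D])
  then have lim: "((\<lambda>v. (v * f v - a * f a) / (v - a)) \<longlongrightarrow> f a + D * a) (at a within {a..})"
    unfolding has_field_derivative_iff by simp
  have "\<forall>\<^sub>F v in at a within {a..}. (v * f v - a * f a) / (v - a) \<le> 0"
    unfolding eventually_at_filter
    using anti by (intro always_eventually) (auto intro: divide_nonpos_pos)
  moreover have "\<not> trivial_limit (at a within {a..})" by (simp add: at_within_Ici_at_right)
  ultimately have "f a + D * a \<le> 0" using tendsto_upperbound[OF lim] by blast
  then show ?thesis using a by (simp add: field_simps)
qed

locale fictitious_play =
  fixes N :: nat
    and mu0 :: "'p::finite \<Rightarrow> 'x::finite \<Rightarrow> real"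
    and P :: "'x \<Rightarrow> 'a::finite \<Rightarrow> 'x \<Rightarrow> real"
    and r :: "'p \<Rightarrow> 'x \<Rightarrow> 'a \<Rightarrow> ('p \<Rightarrow> 'x \<Rightarrow> real) \<Rightarrow> real"
    and pibr :: "real \<Rightarrow> 'p \<Rightarrow> nat \<Rightarrow> 'x \<Rightarrow> 'a \<Rightarrow> real"
    and pol :: "real \<Rightarrow> 'p \<Rightarrow> nat \<Rightarrow> 'x \<Rightarrow> 'a \<Rightarrow> real"
  assumes init: "\<forall>i. is_dist (mu0 i)"
    and trans: "\<forall>x a. is_dist (P x a)"
    and mono: "weakly_monotone r"
    and C1: "\<forall>i x a. C1_on (\<lambda>m::real ^ 'x ^ 'p. r i x a (vec_to_fun m)) simplex_profiles"
    and unif: "\<forall>s\<in>{0..<1}. \<forall>i n x a. pibr s i n x a = 1 / real CARD('a)"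
    and br: "\<forall>t\<ge>1. \<forall>i. is_policy N (pibr t i) \<and>
               (\<forall>pol'. is_policy N pol' \<longrightarrow>
                  J N (mu0 i) P (r i) pol' (fp_mu mu0 P pibr t)
                    \<le> J N (mu0 i) P (r i) (pibr t i) (fp_mu mu0 P pibr t))"
    and meas: "\<forall>i n x a. set_borel_measurable borel {0..} (\<lambda>s. pibr s i n x a)"
    and pol_pos: "\<forall>t\<ge>1. \<forall>i n x a. fp_mu mu0 P pibr t i n x > 0 \<longrightarrow>
               pol t i n x a = fp_rho mu0 P pibr t i n x a / fp_mu mu0 P pibr t i n x"
begin

abbreviation br_occ :: "real \<Rightarrow> 'p \<Rightarrow> nat \<Rightarrow> 'x \<Rightarrow> 'a \<Rightarrow> real" where
  "br_occ s i \<equiv> sa_dist (mu0 i) P (pibr s i)"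

abbreviation "rho \<equiv> fp_rho mu0 P pibr"
abbreviation "mu \<equiv> fp_mu mu0 P pibr"

lemma pibr_policy: "0 \<le> s \<Longrightarrow> is_policy N (pibr s i)"
  using unif br unfolding is_policy_def is_dist_def by (cases "s < 1") auto

lemma br_occ_occupation: "0 \<le> s \<Longrightarrow> is_occupation N (mu0 i) P (br_occ s i)"
  using sa_dist_is_occupation[OF _ trans pibr_policy] init by blast

lemma br_occ_bounded: "0 \<le> s \<Longrightarrow> n \<le> N \<Longrightarrow> 0 \<le> br_occ s i n x a \<and> br_occ s i n x a \<le> 1"
  using occupation_bounded[OF br_occ_occupation init[rule_format] trans] by blast

lemma pibr_measurable:
  assumes "0 \<le> u"
  shows "(\<lambda>s. pibr s i n x a) \<in> borel_measurable (lebesgue_on {u..v})"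
proof -
  have "(\<lambda>s. indicat_real {0..} s *\<^sub>R pibr s i n x a) \<in> borel_measurable (lebesgue_on {u..v})"
    using meas unfolding set_borel_measurable_def
    by (metis measurable_lborel2 measurable_restrict_space1 measurable_completion)
  moreover have "indicat_real {0..} s *\<^sub>R pibr s i n x a = pibr s i n x a"
    if "s \<in> space (lebesgue_on {u..v})" for s
    using assms that by (auto simp: indicator_def)
  ultimately show ?thesis
    using measurable_cong[of "lebesgue_on {u..v}" "\<lambda>s. indicat_real {0..} s *\<^sub>R pibr s i n x a"
        "\<lambda>s. pibr s i n x a" borel]
    by blast
qed

lemma br_occ_integrable:
  assumes u: "0 \<le> u" and n: "n \<le> N"
  shows "(\<lambda>s. br_occ s i n x a) integrable_on {u..v}"
proof (rule measurable_bounded_by_integrable_imp_integrable_real[where g="\<lambda>_. 1"])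
  have "(\<lambda>s. state_dist (mu0 i) P (pibr s i) n x) \<in> borel_measurable (lebesgue_on {u..v})" for n x
    by (induction n arbitrary: x)
      (simp_all add: borel_measurable_sum borel_measurable_times pibr_measurable[OF u])
  then show "(\<lambda>s. br_occ s i n x a) \<in> borel_measurable (lebesgue_on {u..v})"
    unfolding sa_dist_def by (intro borel_measurable_times pibr_measurable[OF u])
  show "\<And>s. s \<in> {u..v} \<Longrightarrow> \<bar>br_occ s i n x a\<bar> \<le> 1" using br_occ_bounded u n by fastforce
qed auto

definition br_avg :: "real \<Rightarrow> real \<Rightarrow> 'p \<Rightarrow> nat \<Rightarrow> 'x \<Rightarrow> 'a \<Rightarrow> real" where
  "br_avg u v i n x a = (1 / (v - u)) * integral {u..v} (\<lambda>s. br_occ s i n x a)"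

lemma br_avg_occupation:
  "0 \<le> u \<Longrightarrow> u < v \<Longrightarrow> is_occupation N (mu0 i) P (br_avg u v i)"
  unfolding br_avg_def
  by (intro integral_average_is_occupation ballI allI impI br_occ_occupation br_occ_integrable) auto

lemma rho_eq_br_avg: "0 < t \<Longrightarrow> rho t i = br_avg 0 t i"
  unfolding fp_rho_def br_avg_def by (intro ext) simp

lemma rho_occupation: "0 < t \<Longrightarrow> is_occupation N (mu0 i) P (rho t i)"
  using rho_eq_br_avg br_avg_occupation[of 0 t] by simp

lemma br_avg_bounded: "0 \<le> u \<Longrightarrow> u < v \<Longrightarrow> n \<le> N \<Longrightarrow> 0 \<le> br_avg u v i n x a \<and> br_avg u v i n x a \<le> 1"
  using occupation_bounded[OF br_avg_occupation init[rule_format] trans] by blast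

lemma rho_bounded: "0 < t \<Longrightarrow> n \<le> N \<Longrightarrow> 0 \<le> rho t i n x a \<and> rho t i n x a \<le> 1"
  using occupation_bounded[OF rho_occupation init[rule_format] trans] by blast

lemma mu_dist: "0 < t \<Longrightarrow> n \<le> N \<Longrightarrow> is_dist (mu t j n)"
  unfolding is_dist_def fp_mu_def using rho_bounded occupation_sum_eq_1[OF rho_occupation init[rule_format] trans]
  by (auto intro: sum_nonneg)

lemma rho_split:
  assumes s: "0 < s" "s < t" and n: "n \<le> N"
  shows "rho t i n x a = rho s i n x a + ((t - s) / t) * (br_avg s t i n x a - rho s i n x a)"
proof -
  have "integral {0..t} (\<lambda>s. br_occ s i n x a)
      = integral {0..s} (\<lambda>s. br_occ s i n x a) + integral {s..t} (\<lambda>s. br_occ s i n x a)"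
    using Henstock_Kurzweil_Integration.integral_combine[OF _ _ br_occ_integrable[OF _ n]] s by simp
  then show ?thesis unfolding fp_rho_def br_avg_def using s by (simp add: field_simps)
qed

lemma rho_lipschitz:
  assumes s: "0 < s" "s \<le> t" and n: "n \<le> N"
  shows "\<bar>rho t i n x a - rho s i n x a\<bar> \<le> (t - s) / t"
proof (cases "s = t")
  case False
  then have "\<bar>br_avg s t i n x a - rho s i n x a\<bar> \<le> 1"
    using br_avg_bounded rho_bounded s n by (smt (verit, best) order_le_less)
  then have "(t - s) * \<bar>br_avg s t i n x a - rho s i n x a\<bar> \<le> t - s"
    using s by (simp add: mult_left_le)
  then show ?thesis
    using rho_split[of s t n i x a] s n False by (simp add: abs_mult divide_right_mono)
qed simp

lemma mu_lipschitz:
  assumes s: "0 < s" "s \<le> t" and n: "n \<le> N"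
  shows "\<bar>mu s i n x - mu t i n x\<bar> \<le> real CARD('a) * ((t - s) / t)"
proof -
  have "\<bar>mu s i n x - mu t i n x\<bar> = \<bar>\<Sum>a\<in>UNIV. rho t i n x a - rho s i n x a\<bar>"
    unfolding fp_mu_def by (simp add: sum_subtractf abs_minus_commute)
  also have "\<dots> \<le> (\<Sum>a\<in>UNIV. \<bar>rho t i n x a - rho s i n x a\<bar>)" by (rule sum_abs)
  also have "\<dots> \<le> (\<Sum>a\<in>(UNIV::'a set). (t - s) / t)" by (intro sum_mono rho_lipschitz s n)
  finally show ?thesis by simp
qed

abbreviation payoff :: "'p \<Rightarrow> (nat \<Rightarrow> 'x \<Rightarrow> 'a \<Rightarrow> real) \<Rightarrow> ('p \<Rightarrow> nat \<Rightarrow> 'x \<Rightarrow> real) \<Rightarrow> real" where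
  "payoff i R m \<equiv> (\<Sum>n\<le>N. \<Sum>x\<in>UNIV. \<Sum>a\<in>UNIV. R n x a * r i x a (\<lambda>j. m j n))"

abbreviation r_mu :: "real \<Rightarrow> 'p \<Rightarrow> nat \<Rightarrow> 'x \<Rightarrow> 'a \<Rightarrow> real" where
  "r_mu s i n x a \<equiv> r i x a (\<lambda>j. mu s j n)"

definition best_value :: "'p \<Rightarrow> ('p \<Rightarrow> nat \<Rightarrow> 'x \<Rightarrow> real) \<Rightarrow> real" where
  "best_value i m = Sup {J N (mu0 i) P (r i) pol' m | pol'. is_policy N pol'}"

lemma payoff_le_sum_abs:
  assumes R: "is_occupation N (mu0 i) P R"
  shows "payoff i R m \<le> (\<Sum>n\<le>N. \<Sum>x\<in>UNIV. \<Sum>a\<in>UNIV. \<bar>r i x a (\<lambda>j. m j n)\<bar>)"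
proof (intro sum_mono)
  fix n x a assume "n \<in> {..N}"
  then have b: "0 \<le> R n x a" "R n x a \<le> 1"
    using occupation_bounded[OF R init[rule_format] trans] by auto
  have "R n x a * r i x a (\<lambda>j. m j n) \<le> R n x a * \<bar>r i x a (\<lambda>j. m j n)\<bar>"
    using b by (intro mult_left_mono) auto
  also have "\<dots> \<le> \<bar>r i x a (\<lambda>j. m j n)\<bar>"
    using b by (intro mult_left_le_one_le) auto
  finally show "R n x a * r i x a (\<lambda>j. m j n) \<le> \<bar>r i x a (\<lambda>j. m j n)\<bar>" .
qed

lemma J_le_best_value:
  assumes pl: "is_policy N pl"
  shows "J N (mu0 i) P (r i) pl m \<le> best_value i m"
proof -
  have "bdd_above {J N (mu0 i) P (r i) pol' m | pol'. is_policy N pol'}"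
    by (rule bdd_aboveI[where M="\<Sum>n\<le>N. \<Sum>x\<in>UNIV. \<Sum>a\<in>UNIV. \<bar>r i x a (\<lambda>j. m j n)\<bar>"])
      (auto simp: J_eq_sa_dist intro!: payoff_le_sum_abs sa_dist_is_occupation init[rule_format] trans)
  then show ?thesis unfolding best_value_def by (rule cSup_upper[rotated]) (use pl in blast)
qed

lemma payoff_le_best_value:
  assumes "is_occupation N (mu0 i) P R"
  shows "payoff i R m \<le> best_value i m"
proof -
  obtain pl where pl: "is_policy N pl" "\<forall>n\<le>N. \<forall>x a. sa_dist (mu0 i) P pl n x a = R n x a"
    using occupation_realizable[OF assms] by blast
  have "payoff i R m = J N (mu0 i) P (r i) pl m"
    unfolding J_eq_sa_dist using pl(2) by (intro sum.cong) auto
  then show ?thesis using J_le_best_value[OF pl(1)] by simp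
qed

lemma best_value_br: "1 \<le> t \<Longrightarrow> best_value i (mu t) = payoff i (br_occ t i) (mu t)"
  using br J_le_best_value[of "pibr t i" i "mu t"] unfolding best_value_def
  by (intro antisym cSup_least) (auto simp flip: J_eq_sa_dist)

lemma best_value_cong: "\<forall>n\<le>N. \<forall>j. m j n = m' j n \<Longrightarrow> best_value i m = best_value i m'"
  unfolding best_value_def J_eq_sa_dist by (intro arg_cong[where f=Sup] Collect_cong) auto

lemma pol_sa_dist:
  assumes t: "1 \<le> t" and n: "n \<le> N"
  shows "state_dist (mu0 i) P (pol t i) n x = mu t i n x" and "sa_dist (mu0 i) P (pol t i) n x a = rho t i n x a"
  using sa_dist_conditional_policy[OF rho_occupation, where pl="pol t i"] pol_pos t n
  unfolding fp_mu_def by auto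

lemma exploitability_eq:
  assumes t: "1 \<le> t"
  shows "exploitability N mu0 P r (pol t) = (\<Sum>i\<in>UNIV. best_value i (mu t) - payoff i (rho t i) (mu t))"
proof -
  have ind: "\<forall>n\<le>N. \<forall>j. induced mu0 P (pol t) j n = mu t j n"
    using pol_sa_dist(1)[OF t] unfolding induced_def by auto
  have "Sup {J N (mu0 i) P (r i) pol' (induced mu0 P (pol t)) | pol'. is_policy N pol'} = best_value i (mu t)"
    for i using best_value_cong[OF ind] unfolding best_value_def .
  moreover have "J N (mu0 i) P (r i) (pol t i) (induced mu0 P (pol t)) = payoff i (rho t i) (mu t)" for i
    unfolding J_eq_sa_dist using pol_sa_dist(2)[OF t] ind by (intro sum.cong) auto
  ultimately show ?thesis unfolding exploitability_def by simp
qed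

lemma mu_in_simplex_profiles: "0 < t \<Longrightarrow> n \<le> N \<Longrightarrow> profile_vec (\<lambda>j. mu t j n) \<in> simplex_profiles"
  using mu_dist by (intro profile_vec_in_simplex_profiles) auto

definition reward_grad :: "'p \<Rightarrow> 'x \<Rightarrow> 'a \<Rightarrow> real ^ 'x ^ 'p \<Rightarrow> real ^ 'x ^ 'p" where
  "reward_grad i x a = (SOME g. \<forall>m\<in>simplex_profiles.
     ((\<lambda>m. r i x a (vec_to_fun m)) has_derivative (\<lambda>h. g m \<bullet> h)) (at m within simplex_profiles))"

lemma reward_has_derivative:
  assumes "m \<in> simplex_profiles"
  shows "((\<lambda>m. r i x a (vec_to_fun m)) has_derivative (\<lambda>h. reward_grad i x a m \<bullet> h)) (at m within simplex_profiles)"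
proof -
  have "\<exists>g. \<forall>m\<in>simplex_profiles.
      ((\<lambda>m. r i x a (vec_to_fun m)) has_derivative (\<lambda>h. g m \<bullet> h)) (at m within simplex_profiles)"
    using C1 unfolding C1_on_def by blast
  then have "\<forall>m\<in>simplex_profiles.
      ((\<lambda>m. r i x a (vec_to_fun m)) has_derivative (\<lambda>h. reward_grad i x a m \<bullet> h)) (at m within simplex_profiles)"
    unfolding reward_grad_def by (rule someI_ex)
  then show ?thesis using assms by blast
qed

lemma reward_mu_tendsto_left:
  assumes t: "1 \<le> t" and n: "n \<le> N"
  shows "((\<lambda>s. r_mu s i n x a) \<longlongrightarrow> r_mu t i n x a) (at t within {1..t})"
proof -
  have ev_in: "\<forall>\<^sub>F s in at t within {1..t}. s \<in> {1..t}" by (simp add: eventually_at_filter)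
  have "((\<lambda>s. mu s j n y) \<longlongrightarrow> mu t j n y) (at t within {1..t})" for j y
  proof -
    have "((\<lambda>s. mu s j n y - mu t j n y) \<longlongrightarrow> 0) (at t within {1..t})"
    proof (rule Lim_null_comparison)
      show "\<forall>\<^sub>F s in at t within {1..t}. norm (mu s j n y - mu t j n y) \<le> real CARD('a) * ((t - s) / t)"
        using ev_in by eventually_elim (use mu_lipschitz n in auto)
      have "((\<lambda>s. real CARD('a) * ((t - s) / t)) \<longlongrightarrow> real CARD('a) * ((t - t) / t)) (at t within {1..t})"
        by (intro tendsto_intros) (use t in auto)
      then show "((\<lambda>s. real CARD('a) * ((t - s) / t)) \<longlongrightarrow> 0) (at t within {1..t})" by simp
    qed
    then show ?thesis by (simp add: LIM_zero_iff)
  qed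
  then have lim: "((\<lambda>s. profile_vec (\<lambda>j. mu s j n)) \<longlongrightarrow> profile_vec (\<lambda>j. mu t j n)) (at t within {1..t})"
    unfolding profile_vec_def by (intro tendsto_vec_lambda)
  have cont: "continuous (at (profile_vec (\<lambda>j. mu t j n)) within simplex_profiles) (\<lambda>m. r i x a (vec_to_fun m))"
    using reward_has_derivative[THEN has_derivative_continuous] mu_in_simplex_profiles t n by simp
  have ev: "\<forall>\<^sub>F s in at t within {1..t}. profile_vec (\<lambda>j. mu s j n) \<in> simplex_profiles"
    using ev_in by eventually_elim (use mu_in_simplex_profiles n in auto)
  have "((\<lambda>s. r i x a (vec_to_fun (profile_vec (\<lambda>j. mu s j n))))
      \<longlongrightarrow> r i x a (vec_to_fun (profile_vec (\<lambda>j. mu t j n)))) (at t within {1..t})"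
    by (rule continuous_within_tendsto_compose[OF cont ev lim])
  then show ?thesis by simp
qed

definition reward_dev :: "real \<Rightarrow> real \<Rightarrow> real" where
  "reward_dev t s = (\<Sum>i\<in>UNIV. \<Sum>n\<le>N. \<Sum>x\<in>UNIV. \<Sum>a\<in>UNIV. \<bar>r_mu s i n x a - r_mu t i n x a\<bar>)"

lemma reward_dev_small:
  assumes t: "1 \<le> t" and e: "0 < e"
  obtains d where "d > 0" and "\<And>s. 1 \<le> s \<Longrightarrow> s \<le> t \<Longrightarrow> t - s < d \<Longrightarrow> reward_dev t s < e"
proof -
  have "((\<lambda>s. reward_dev t s) \<longlongrightarrow> reward_dev t t) (at t within {1..t})"
    unfolding reward_dev_def
    by (intro tendsto_sum tendsto_rabs tendsto_diff tendsto_const reward_mu_tendsto_left t) auto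
  then have "\<forall>\<^sub>F s in at t within {1..t}. dist (reward_dev t s) 0 < e"
    using e unfolding tendsto_iff reward_dev_def by simp
  then obtain d where d: "d > 0" "\<forall>s\<in>{1..t}. s \<noteq> t \<and> dist s t < d \<longrightarrow> dist (reward_dev t s) 0 < e"
    unfolding eventually_at by blast
  show ?thesis
  proof (rule that[OF d(1)])
    fix s assume s: "1 \<le> s" "s \<le> t" "t - s < d"
    show "reward_dev t s < e"
      using d(2) s e by (cases "s = t") (auto simp: dist_real_def reward_dev_def)
  qed
qed

lemma payoff_dev_le:
  assumes X: "\<forall>n\<le>N. \<forall>x a. 0 \<le> X n x a \<and> X n x a \<le> 1"
  shows "\<bar>payoff i X (mu q) - payoff i X (mu t)\<bar> \<le> reward_dev t q"
proof -
  have "\<bar>payoff i X (mu q) - payoff i X (mu t)\<bar>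
      = \<bar>\<Sum>n\<le>N. \<Sum>x\<in>UNIV. \<Sum>a\<in>UNIV. X n x a * (r_mu q i n x a - r_mu t i n x a)\<bar>"
    by (simp add: sum_subtractf algebra_simps)
  also have "\<dots> \<le> (\<Sum>n\<le>N. \<bar>\<Sum>x\<in>UNIV. \<Sum>a\<in>UNIV. X n x a * (r_mu q i n x a - r_mu t i n x a)\<bar>)"
    by (rule sum_abs)
  also have "\<dots> \<le> (\<Sum>n\<le>N. \<Sum>x\<in>UNIV. \<bar>\<Sum>a\<in>UNIV. X n x a * (r_mu q i n x a - r_mu t i n x a)\<bar>)"
    by (intro sum_mono sum_abs)
  also have "\<dots> \<le> (\<Sum>n\<le>N. \<Sum>x\<in>UNIV. \<Sum>a\<in>UNIV. \<bar>X n x a * (r_mu q i n x a - r_mu t i n x a)\<bar>)"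
    by (intro sum_mono sum_abs)
  also have "\<dots> \<le> (\<Sum>n\<le>N. \<Sum>x\<in>UNIV. \<Sum>a\<in>UNIV. \<bar>r_mu q i n x a - r_mu t i n x a\<bar>)"
    using X by (intro sum_mono) (simp add: abs_mult mult_left_le_one_le)
  also have "\<dots> \<le> reward_dev t q"
    unfolding reward_dev_def
    by (rule member_le_sum[of i UNIV "\<lambda>i. \<Sum>n\<le>N. \<Sum>x\<in>UNIV. \<Sum>a\<in>UNIV. \<bar>r_mu q i n x a - r_mu t i n x a\<bar>"])
      (auto intro: sum_nonneg)
  finally show ?thesis .
qed

lemma payoff_br_avg:
  assumes u: "0 \<le> u" "u < v"
  shows "(\<lambda>s. payoff i (br_occ s i) m) integrable_on {u..v}"
    and "payoff i (br_avg u v i) m = (1 / (v - u)) * integral {u..v} (\<lambda>s. payoff i (br_occ s i) m)"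
proof -
  have int: "(\<lambda>s. br_occ s i n x a * c) integrable_on {u..v}" if "n \<in> {..N}" for n x a c
    using br_occ_integrable u that by (intro integrable_on_mult_left) simp
  show "(\<lambda>s. payoff i (br_occ s i) m) integrable_on {u..v}"
    by (intro integrable_sum int) auto
  have "integral {u..v} (\<lambda>s. payoff i (br_occ s i) m)
      = (\<Sum>n\<le>N. integral {u..v} (\<lambda>s. \<Sum>x\<in>UNIV. \<Sum>a\<in>UNIV. br_occ s i n x a * r i x a (\<lambda>j. m j n)))"
    by (rule integral_sum) (auto intro!: integrable_sum int)
  also have "\<dots> = (\<Sum>n\<le>N. \<Sum>x\<in>UNIV. integral {u..v} (\<lambda>s. \<Sum>a\<in>UNIV. br_occ s i n x a * r i x a (\<lambda>j. m j n)))"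
    by (intro sum.cong refl integral_sum) (auto intro!: integrable_sum int)
  also have "\<dots> = (\<Sum>n\<le>N. \<Sum>x\<in>UNIV. \<Sum>a\<in>UNIV. integral {u..v} (\<lambda>s. br_occ s i n x a * r i x a (\<lambda>j. m j n)))"
    by (intro sum.cong refl integral_sum) (auto intro!: int)
  also have "\<dots> = (\<Sum>n\<le>N. \<Sum>x\<in>UNIV. \<Sum>a\<in>UNIV. integral {u..v} (\<lambda>s. br_occ s i n x a) * r i x a (\<lambda>j. m j n))"
    by (simp add: integral_mult_left)
  finally show "payoff i (br_avg u v i) m = (1 / (v - u)) * integral {u..v} (\<lambda>s. payoff i (br_occ s i) m)"
    unfolding br_avg_def by (simp add: sum_distrib_left mult_ac)
qed

lemma br_avg_near_optimal:
  assumes t: "1 < t" and e: "0 < e"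
  obtains d where "d > 0"
    and "\<And>h. 0 < h \<Longrightarrow> h < d \<Longrightarrow> h \<le> t - 1 \<Longrightarrow> best_value i (mu t) - 2 * e \<le> payoff i (br_avg (t - h) t i) (mu t)"
proof -
  obtain d where d: "d > 0" and dev: "\<And>s. 1 \<le> s \<Longrightarrow> s \<le> t \<Longrightarrow> t - s < d \<Longrightarrow> reward_dev t s < e"
    using reward_dev_small[OF less_imp_le[OF t] e] by blast
  show ?thesis
  proof (rule that[OF d])
    fix h assume h: "0 < h" "h < d" "h \<le> t - 1"
    have near: "best_value i (mu t) - 2 * e \<le> payoff i (br_occ s i) (mu t)" if s: "s \<in> {t - h..t}" for s
    proof -
      have s1: "1 \<le> s" "s \<le> t" "t - s < d" using s h by auto
      have "\<bar>payoff i (br_occ s i) (mu s) - payoff i (br_occ s i) (mu t)\<bar> \<le> reward_dev t s"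
        by (rule payoff_dev_le) (use br_occ_bounded s1 in auto)
      moreover have "\<bar>payoff i (br_occ t i) (mu s) - payoff i (br_occ t i) (mu t)\<bar> \<le> reward_dev t s"
        by (rule payoff_dev_le) (use br_occ_bounded t in auto)
      moreover have "payoff i (br_occ t i) (mu s) \<le> payoff i (br_occ s i) (mu s)"
        using best_value_br[OF s1(1), of i] payoff_le_best_value[OF br_occ_occupation, of t i "mu s"] t
        by simp
      moreover have "best_value i (mu t) = payoff i (br_occ t i) (mu t)"
        using best_value_br t by simp
      ultimately show ?thesis using dev[OF s1] by linarith
    qed
    have uv: "0 \<le> t - h" "t - h < t" using h t by auto
    have "h * (best_value i (mu t) - 2 * e) \<le> integral {t - h..t} (\<lambda>s. payoff i (br_occ s i) (mu t))"
      using integral_le[OF integrable_const_ivl payoff_br_avg(1)[OF uv] near] h by simp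
    then have "best_value i (mu t) - 2 * e \<le> integral {t - h..t} (\<lambda>s. payoff i (br_occ s i) (mu t)) / h"
      using h by (simp add: pos_le_divide_eq mult.commute)
    also have "\<dots> = payoff i (br_avg (t - h) t i) (mu t)"
      using payoff_br_avg(2)[OF uv, of i "mu t"] by simp
    finally show "best_value i (mu t) - 2 * e \<le> payoff i (br_avg (t - h) t i) (mu t)" .
  qed
qed

lemma weakly_monotone_gradient:
  fixes A B :: "'p \<Rightarrow> 'x \<Rightarrow> 'a \<Rightarrow> real"
  assumes dA: "\<forall>i. is_dist (\<lambda>(x, a). A i x a)" and dB: "\<forall>i. is_dist (\<lambda>(x, a). B i x a)"
  defines "mA \<equiv> profile_vec (\<lambda>j y. \<Sum>b\<in>UNIV. A j y b)"
    and "mB \<equiv> profile_vec (\<lambda>j y. \<Sum>b\<in>UNIV. B j y b)"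
  shows "(\<Sum>i\<in>UNIV. \<Sum>x\<in>UNIV. \<Sum>a\<in>UNIV. (B i x a - A i x a) * (reward_grad i x a mA \<bullet> (mB - mA))) \<le> 0"
proof -
  \<comment> \<open>Weak monotonicity for A and A + e (B - A), divided by e, in the limit e \<rightarrow> 0.\<close>
  define e where "e k = 1 / real (Suc k)" for k
  define C where "C k i x a = A i x a + e k * (B i x a - A i x a)" for k i x a
  define mC where "mC k = profile_vec (\<lambda>j y. \<Sum>b\<in>UNIV. C k j y b)" for k
  define f where "f i x a m = r i x a (vec_to_fun m)" for i x a m
  have e: "0 < e k" "e k \<le> 1" for k unfolding e_def by auto
  have dC: "\<forall>i. is_dist (\<lambda>(x, a). C k i x a)" for k
    using is_dist_convex_comb[OF dA[rule_format] dB[rule_format] less_imp_le[OF e(1)] e(2)]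
    unfolding C_def by (simp add: case_prod_beta')
  have mC: "mC k = mA + e k *\<^sub>R (mB - mA)" for k
    unfolding mC_def mA_def mB_def C_def profile_vec_def
    by (simp add: vec_eq_iff sum.distrib sum_distrib_left sum_subtractf algebra_simps)
  have in_simplex: "mA \<in> simplex_profiles" "mC k \<in> simplex_profiles" for k
    unfolding mA_def mC_def using dA dC is_dist_marginal by (auto intro!: profile_vec_in_simplex_profiles)
  have quot: "0 \<le> (\<Sum>i\<in>UNIV. \<Sum>x\<in>UNIV. \<Sum>a\<in>UNIV. (B i x a - A i x a) * ((f i x a mA - f i x a (mC k)) / e k))" for k
  proof -
    have "(\<Sum>i\<in>UNIV. \<Sum>x\<in>UNIV. \<Sum>a\<in>UNIV. (C k i x a - A i x a) *
            (r i x a (\<lambda>j y. \<Sum>b\<in>UNIV. C k j y b) - r i x a (\<lambda>j y. \<Sum>b\<in>UNIV. A j y b))) \<le> 0"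
      using mono dC dA unfolding weakly_monotone_def by blast
    then have "e k * (\<Sum>i\<in>UNIV. \<Sum>x\<in>UNIV. \<Sum>a\<in>UNIV. (B i x a - A i x a) * (f i x a (mC k) - f i x a mA)) \<le> 0"
      unfolding C_def f_def mC_def mA_def by (simp add: sum_distrib_left mult_ac)
    then have "(\<Sum>i\<in>UNIV. \<Sum>x\<in>UNIV. \<Sum>a\<in>UNIV. (B i x a - A i x a) * (f i x a mA - f i x a (mC k))) \<ge> 0"
      using e(1)[of k] by (simp add: mult_le_0_iff sum_subtractf right_diff_distrib)
    moreover have "(\<Sum>i\<in>UNIV. \<Sum>x\<in>UNIV. \<Sum>a\<in>UNIV. (B i x a - A i x a) * ((f i x a mA - f i x a (mC k)) / e k))
        = (\<Sum>i\<in>UNIV. \<Sum>x\<in>UNIV. \<Sum>a\<in>UNIV. (B i x a - A i x a) * (f i x a mA - f i x a (mC k))) / e k"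
      by (simp add: sum_divide_distrib)
    ultimately show ?thesis using e(1)[of k] by simp
  qed
  have "(\<lambda>k. (f i x a mA - f i x a (mC k)) / e k) \<longlonglongrightarrow> reward_grad i x a mA \<bullet> (mA - mB)" for i x a
  proof (rule has_derivative_within_quotient_tendsto)
    show "(f i x a has_derivative (\<bullet>) (reward_grad i x a mA)) (at mA within simplex_profiles)"
      unfolding f_def using reward_has_derivative[OF in_simplex(1)] by simp
    show "e \<longlonglongrightarrow> 0" unfolding e_def by (rule LIMSEQ_Suc[OF lim_inverse_n'])
    have "(mA - mC k) /\<^sub>R e k = mA - mB" for k using e(1)[of k] unfolding mC by (simp add: algebra_simps)
    then show "(\<lambda>k. (mA - mC k) /\<^sub>R e k) \<longlonglongrightarrow> mA - mB" by simp
  qed (use in_simplex e in auto)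
  then have "(\<lambda>k. \<Sum>i\<in>UNIV. \<Sum>x\<in>UNIV. \<Sum>a\<in>UNIV. (B i x a - A i x a) * ((f i x a mA - f i x a (mC k)) / e k))
      \<longlonglongrightarrow> (\<Sum>i\<in>UNIV. \<Sum>x\<in>UNIV. \<Sum>a\<in>UNIV. (B i x a - A i x a) * (reward_grad i x a mA \<bullet> (mA - mB)))"
    by (intro tendsto_sum tendsto_mult tendsto_const)
  then have "0 \<le> (\<Sum>i\<in>UNIV. \<Sum>x\<in>UNIV. \<Sum>a\<in>UNIV. (B i x a - A i x a) * (reward_grad i x a mA \<bullet> (mA - mB)))"
    using quot by (intro LIMSEQ_le_const) auto
  then show ?thesis
    by (simp add: inner_diff_right sum_subtractf right_diff_distrib)
qed

lemma limit_of_br_avg_optimal: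
  assumes t: "1 < t" and h: "h \<longlonglongrightarrow> 0" "\<And>k. 0 < h k" "\<And>k. h k \<le> t - 1"
    and L: "is_occupation N (mu0 i) P L"
    and lim: "\<And>n x a. n \<le> N \<Longrightarrow> (\<lambda>k. br_avg (t - h k) t i n x a) \<longlonglongrightarrow> L n x a"
  shows "payoff i L (mu t) = best_value i (mu t)"
proof (rule antisym)
  show "payoff i L (mu t) \<le> best_value i (mu t)" by (rule payoff_le_best_value[OF L])
  have lim_payoff: "(\<lambda>k. payoff i (br_avg (t - h k) t i) (mu t)) \<longlonglongrightarrow> payoff i L (mu t)"
    by (intro tendsto_sum tendsto_mult tendsto_const lim) auto
  have approx: "best_value i (mu t) - 2 * e \<le> payoff i L (mu t)" if e: "0 < e" for e
  proof -
    obtain d where d: "d > 0" and near: "\<And>h. 0 < h \<Longrightarrow> h < d \<Longrightarrow> h \<le> t - 1 \<Longrightarrow>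
        best_value i (mu t) - 2 * e \<le> payoff i (br_avg (t - h) t i) (mu t)"
      using br_avg_near_optimal[OF t e] by blast
    obtain k0 where k0: "\<forall>k\<ge>k0. norm (h k - 0) < d" using LIMSEQ_D[OF h(1) d] by blast
    have "\<forall>k\<ge>k0. best_value i (mu t) - 2 * e \<le> payoff i (br_avg (t - h k) t i) (mu t)"
    proof (intro allI impI near)
      fix k assume "k0 \<le> k"
      then show "h k < d" using k0 h(2)[of k] by auto
    qed (use h in auto)
    then show ?thesis using LIMSEQ_le_const[OF lim_payoff] by blast
  qed
  show "best_value i (mu t) \<le> payoff i L (mu t)"
  proof (rule field_le_epsilon)
    fix e :: real assume "0 < e"
    then show "best_value i (mu t) \<le> payoff i L (mu t) + e" using approx[of "e / 2"] by simp
  qed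
qed

(* The best responses pibr s need not depend continuously on s; a limit point of their averages
   over [t - h, t] takes the role of the best response at time t. *)
lemma optimal_limit_of_br_avg:
  assumes t: "1 < t"
  obtains h L where "h \<longlonglongrightarrow> 0" and "\<And>k. 0 < h k" and "\<And>k. h k \<le> t - 1"
    and "\<And>i n x a. n \<le> N \<Longrightarrow> (\<lambda>k. br_avg (t - h k) t i n x a) \<longlonglongrightarrow> L i n x a"
    and "\<And>i. is_occupation N (mu0 i) P (L i)"
    and "\<And>i. payoff i (L i) (mu t) = best_value i (mu t)"
proof -
  define h0 where "h0 k = (t - 1) / real (Suc k)" for k
  have h0: "0 < h0 k" "h0 k \<le> t - 1" for k
    unfolding h0_def using t by (auto intro: divide_left_mono[of 1 _ "t - 1", simplified])
  have "(\<lambda>k. (t - 1) * inverse (real (Suc k))) \<longlonglongrightarrow> (t - 1) * 0"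
    by (intro tendsto_mult tendsto_const LIMSEQ_inverse_real_of_nat)
  then have h0_lim: "h0 \<longlonglongrightarrow> 0" unfolding h0_def by (simp add: divide_inverse)
  define S where "S = (UNIV :: 'p set) \<times> {..N} \<times> (UNIV :: 'x set) \<times> (UNIV :: 'a set)"
  obtain \<sigma> l where \<sigma>: "strict_mono \<sigma>"
    and conv: "\<forall>q\<in>S. (\<lambda>k. (\<lambda>(i, n, x, a). br_avg (t - h0 (\<sigma> k)) t i n x a) q) \<longlonglongrightarrow> l q"
  proof (rule finite_family_convergent_subseq[of S "\<lambda>k (i, n, x, a). br_avg (t - h0 k) t i n x a" 1])
    show "finite S" unfolding S_def by simp
    show "\<forall>k. \<forall>q\<in>S. \<bar>(case q of (i, n, x, a) \<Rightarrow> br_avg (t - h0 k) t i n x a)\<bar> \<le> 1"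
    proof (intro allI ballI)
      fix k q assume "q \<in> S"
      then obtain i n x a where q: "q = (i, n, x, a)" and n: "n \<le> N" unfolding S_def by auto
      have "0 \<le> t - h0 k" "t - h0 k < t" using h0[of k] t by auto
      then show "\<bar>(case q of (i, n, x, a) \<Rightarrow> br_avg (t - h0 k) t i n x a)\<bar> \<le> 1"
        using br_avg_bounded[OF _ _ n, of "t - h0 k" t i x a] q by simp
    qed
  qed
  define h where "h = h0 \<circ> \<sigma>"
  define L where "L i n x a = l (i, n, x, a)" for i n x a
  have h: "h \<longlonglongrightarrow> 0" "0 < h k" "h k \<le> t - 1" for k
    unfolding h_def using LIMSEQ_subseq_LIMSEQ[OF h0_lim \<sigma>] h0 by auto
  have lim: "(\<lambda>k. br_avg (t - h k) t i n x a) \<longlonglongrightarrow> L i n x a" if "n \<le> N" for i n x a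
    using conv[rule_format, of "(i, n, x, a)"] that unfolding S_def L_def h_def by simp
  have "is_occupation N (mu0 i) P (br_avg (t - h k) t i)" for i k
    using h(2,3)[of k] t by (intro br_avg_occupation) auto
  then have occ: "is_occupation N (mu0 i) P (L i)" for i
    using lim by (intro is_occupation_limit[where Rk="\<lambda>k. br_avg (t - h k) t i"]) auto
  show thesis
    using that[OF h(1) h(2) h(3) lim occ limit_of_br_avg_optimal[OF t h occ lim]] by simp
qed

lemma exploitability_quotient_le:
  assumes s: "1 \<le> s" "s < t"
    and L: "\<And>i. is_occupation N (mu0 i) P (L i)"
    and L_opt: "\<And>i. payoff i (L i) (mu t) = best_value i (mu t)"
  shows "(exploitability N mu0 P r (pol t) - exploitability N mu0 P r (pol s)) / (t - s)
    \<le> (\<Sum>i\<in>UNIV. \<Sum>n\<le>N. \<Sum>x\<in>UNIV. \<Sum>a\<in>UNIV.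
         (L i n x a - rho s i n x a) * ((r_mu t i n x a - r_mu s i n x a) / (t - s))
         - (1 / t) * (br_avg s t i n x a - rho s i n x a) * r_mu t i n x a)"
proof -
  have "exploitability N mu0 P r (pol s) \<ge> (\<Sum>i\<in>UNIV. payoff i (L i) (mu s) - payoff i (rho s i) (mu s))"
    unfolding exploitability_eq[OF s(1)] using payoff_le_best_value[OF L]
    by (intro sum_mono diff_right_mono) auto
  moreover have "exploitability N mu0 P r (pol t) = (\<Sum>i\<in>UNIV. payoff i (L i) (mu t) - payoff i (rho t i) (mu t))"
    using exploitability_eq[of t] s L_opt by simp
  ultimately have "exploitability N mu0 P r (pol t) - exploitability N mu0 P r (pol s)
      \<le> (\<Sum>i\<in>UNIV. \<Sum>n\<le>N. \<Sum>x\<in>UNIV. \<Sum>a\<in>UNIV.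
           L i n x a * r_mu t i n x a - rho t i n x a * r_mu t i n x a
           - L i n x a * r_mu s i n x a + rho s i n x a * r_mu s i n x a)"
    by (simp add: sum_subtractf sum.distrib)
  also have "\<dots> = (\<Sum>i\<in>UNIV. \<Sum>n\<le>N. \<Sum>x\<in>UNIV. \<Sum>a\<in>UNIV.
         ((L i n x a - rho s i n x a) * ((r_mu t i n x a - r_mu s i n x a) / (t - s))
         - (1 / t) * (br_avg s t i n x a - rho s i n x a) * r_mu t i n x a) * (t - s))"
  proof (intro sum.cong refl)
    fix i n x a assume "n \<in> {..N}"
    then have split: "rho t i n x a = rho s i n x a + ((t - s) / t) * (br_avg s t i n x a - rho s i n x a)"
      using rho_split s by simp
    show "L i n x a * r_mu t i n x a - rho t i n x a * r_mu t i n x a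
           - L i n x a * r_mu s i n x a + rho s i n x a * r_mu s i n x a
        = ((L i n x a - rho s i n x a) * ((r_mu t i n x a - r_mu s i n x a) / (t - s))
         - (1 / t) * (br_avg s t i n x a - rho s i n x a) * r_mu t i n x a) * (t - s)"
      unfolding split using s by (simp add: field_simps)
  qed
  finally show ?thesis
    using s by (simp add: pos_divide_le_eq flip: sum_distrib_right)
qed

lemma rho_tendsto_left:
  assumes h: "h \<longlonglongrightarrow> 0" "\<And>k. 0 < h k" "\<And>k. h k \<le> t - 1" and n: "n \<le> N"
  shows "(\<lambda>k. rho (t - h k) i n x a) \<longlonglongrightarrow> rho t i n x a"
proof -
  have t: "1 < t" using h(2,3)[of 0] by simp
  have "(\<lambda>k. rho (t - h k) i n x a - rho t i n x a) \<longlonglongrightarrow> 0"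
  proof (rule Lim_null_comparison)
    have "\<bar>rho t i n x a - rho (t - h k) i n x a\<bar> \<le> (t - (t - h k)) / t" for k
      using h(2,3)[of k] n by (intro rho_lipschitz) auto
    then show "\<forall>\<^sub>F k in sequentially. norm (rho (t - h k) i n x a - rho t i n x a) \<le> h k / t"
      by (intro always_eventually allI) (simp add: abs_minus_commute)
    show "(\<lambda>k. h k / t) \<longlonglongrightarrow> 0" using tendsto_divide[OF h(1) tendsto_const[of t]] t by simp
  qed
  then show ?thesis by (simp add: LIM_zero_iff)
qed

lemma mu_quotient_tendsto:
  assumes h: "h \<longlonglongrightarrow> 0" "\<And>k. 0 < h k" "\<And>k. h k \<le> t - 1"
    and lim: "\<And>i n x a. n \<le> N \<Longrightarrow> (\<lambda>k. br_avg (t - h k) t i n x a) \<longlonglongrightarrow> L i n x a"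
    and n: "n \<le> N"
  shows "(\<lambda>k. (profile_vec (\<lambda>j. mu t j n) - profile_vec (\<lambda>j. mu (t - h k) j n)) /\<^sub>R h k)
    \<longlonglongrightarrow> (1 / t) *\<^sub>R (profile_vec (\<lambda>j y. \<Sum>b\<in>UNIV. L j n y b) - profile_vec (\<lambda>j. mu t j n))"
proof -
  have t: "1 < t" using h(2,3)[of 0] by simp
  have split: "inverse (h k) * (mu t j n y - mu (t - h k) j n y)
      = (1 / t) * ((\<Sum>b\<in>UNIV. br_avg (t - h k) t j n y b) - mu (t - h k) j n y)" for k j y
  proof -
    have "mu t j n y - mu (t - h k) j n y
        = (\<Sum>b\<in>UNIV. (h k / t) * (br_avg (t - h k) t j n y b - rho (t - h k) j n y b))"
      unfolding fp_mu_def using rho_split[of "t - h k" t n] h(2,3)[of k] n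
      by (simp add: sum_subtractf[symmetric])
    also have "\<dots> = (h k / t) * ((\<Sum>b\<in>UNIV. br_avg (t - h k) t j n y b) - mu (t - h k) j n y)"
      unfolding fp_mu_def by (simp add: sum_distrib_left sum_subtractf right_diff_distrib)
    finally show ?thesis using h(2)[of k] by simp
  qed
  have mu_lim: "(\<lambda>k. mu (t - h k) j n y) \<longlonglongrightarrow> mu t j n y" for j y
    unfolding fp_mu_def by (intro tendsto_sum rho_tendsto_left[OF h n])
  have "(\<lambda>k. \<chi> j y. (1 / t) * ((\<Sum>b\<in>UNIV. br_avg (t - h k) t j n y b) - mu (t - h k) j n y))
      \<longlonglongrightarrow> (\<chi> j y. (1 / t) * ((\<Sum>b\<in>UNIV. L j n y b) - mu t j n y))"
    by (intro tendsto_vec_lambda tendsto_mult tendsto_const tendsto_diff tendsto_sum lim n mu_lim)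
  moreover have "(profile_vec (\<lambda>j. mu t j n) - profile_vec (\<lambda>j. mu (t - h k) j n)) /\<^sub>R h k
      = (\<chi> j y. (1 / t) * ((\<Sum>b\<in>UNIV. br_avg (t - h k) t j n y b) - mu (t - h k) j n y))" for k
    unfolding profile_vec_def vec_eq_iff using split by simp
  moreover have "(1 / t) *\<^sub>R (profile_vec (\<lambda>j y. \<Sum>b\<in>UNIV. L j n y b) - profile_vec (\<lambda>j. mu t j n))
      = (\<chi> j y. (1 / t) * ((\<Sum>b\<in>UNIV. L j n y b) - mu t j n y))"
    unfolding profile_vec_def vec_eq_iff by simp
  ultimately show ?thesis by simp
qed

lemma reward_quotient_tendsto:
  assumes h: "h \<longlonglongrightarrow> 0" "\<And>k. 0 < h k" "\<And>k. h k \<le> t - 1"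
    and lim: "\<And>i n x a. n \<le> N \<Longrightarrow> (\<lambda>k. br_avg (t - h k) t i n x a) \<longlonglongrightarrow> L i n x a"
    and n: "n \<le> N"
  shows "(\<lambda>k. (r_mu t i n x a - r_mu (t - h k) i n x a) / h k)
    \<longlonglongrightarrow> reward_grad i x a (profile_vec (\<lambda>j. mu t j n))
          \<bullet> ((1 / t) *\<^sub>R (profile_vec (\<lambda>j y. \<Sum>b\<in>UNIV. L j n y b) - profile_vec (\<lambda>j. mu t j n)))"
proof -
  have t: "1 < t" using h(2,3)[of 0] by simp
  have "(\<lambda>k. (r i x a (vec_to_fun (profile_vec (\<lambda>j. mu t j n)))
        - r i x a (vec_to_fun (profile_vec (\<lambda>j. mu (t - h k) j n)))) / h k)
    \<longlonglongrightarrow> reward_grad i x a (profile_vec (\<lambda>j. mu t j n))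
          \<bullet> ((1 / t) *\<^sub>R (profile_vec (\<lambda>j y. \<Sum>b\<in>UNIV. L j n y b) - profile_vec (\<lambda>j. mu t j n)))"
  proof (rule has_derivative_within_quotient_tendsto)
    show "((\<lambda>m. r i x a (vec_to_fun m)) has_derivative (\<bullet>) (reward_grad i x a (profile_vec (\<lambda>j. mu t j n))))
        (at (profile_vec (\<lambda>j. mu t j n)) within simplex_profiles)"
      using reward_has_derivative[OF mu_in_simplex_profiles] t n by simp
    have "0 < t - h k" for k using h(3)[of k] by simp
    then show "\<forall>k. profile_vec (\<lambda>j. mu (t - h k) j n) \<in> simplex_profiles"
      using mu_in_simplex_profiles n by blast
  qed (use h mu_quotient_tendsto[OF h lim n] in auto)
  then show ?thesis by simp
qed

lemma quotient_bound_limit_le: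
  assumes t: "1 \<le> t"
    and L: "\<And>i. is_occupation N (mu0 i) P (L i)"
    and L_opt: "\<And>i. payoff i (L i) (mu t) = best_value i (mu t)"
  shows "(\<Sum>i\<in>UNIV. \<Sum>n\<le>N. \<Sum>x\<in>UNIV. \<Sum>a\<in>UNIV.
      (L i n x a - rho t i n x a) * (reward_grad i x a (profile_vec (\<lambda>j. mu t j n))
         \<bullet> ((1 / t) *\<^sub>R (profile_vec (\<lambda>j y. \<Sum>b\<in>UNIV. L j n y b) - profile_vec (\<lambda>j. mu t j n))))
      - (1 / t) * (L i n x a - rho t i n x a) * r_mu t i n x a)
    \<le> - (1 / t) * exploitability N mu0 P r (pol t)"
proof -
  define G where "G i n x a = reward_grad i x a (profile_vec (\<lambda>j. mu t j n))
      \<bullet> (profile_vec (\<lambda>j y. \<Sum>b\<in>UNIV. L j n y b) - profile_vec (\<lambda>j. mu t j n))" for i n x a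
  have mono_n: "(\<Sum>i\<in>UNIV. \<Sum>x\<in>UNIV. \<Sum>a\<in>UNIV. (L i n x a - rho t i n x a) * G i n x a) \<le> 0" if n: "n \<le> N" for n
  proof -
    have mu_eq: "(\<lambda>j. mu t j n) = (\<lambda>j y. \<Sum>b\<in>UNIV. rho t j n y b)" unfolding fp_mu_def ..
    have "\<forall>i. is_dist (\<lambda>(x, a). rho t i n x a)" "\<forall>i. is_dist (\<lambda>(x, a). L i n x a)"
      using occupation_is_dist[OF rho_occupation init[rule_format] trans n]
        occupation_is_dist[OF L init[rule_format] trans n] t by auto
    from weakly_monotone_gradient[OF this] show ?thesis unfolding G_def mu_eq .
  qed
  have "exploitability N mu0 P r (pol t)
      = (\<Sum>i\<in>UNIV. \<Sum>n\<le>N. \<Sum>x\<in>UNIV. \<Sum>a\<in>UNIV. (L i n x a - rho t i n x a) * r_mu t i n x a)"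
    unfolding exploitability_eq[OF t] L_opt[symmetric] by (simp add: sum_subtractf left_diff_distrib)
  moreover have "(\<Sum>i\<in>UNIV. \<Sum>n\<le>N. \<Sum>x\<in>UNIV. \<Sum>a\<in>UNIV. (L i n x a - rho t i n x a) * G i n x a) \<le> 0"
    using mono_n by (subst sum.swap) (auto intro: sum_nonpos)
  moreover have "(\<Sum>i\<in>UNIV. \<Sum>n\<le>N. \<Sum>x\<in>UNIV. \<Sum>a\<in>UNIV.
      (L i n x a - rho t i n x a) * (reward_grad i x a (profile_vec (\<lambda>j. mu t j n))
         \<bullet> ((1 / t) *\<^sub>R (profile_vec (\<lambda>j y. \<Sum>b\<in>UNIV. L j n y b) - profile_vec (\<lambda>j. mu t j n))))
      - (1 / t) * (L i n x a - rho t i n x a) * r_mu t i n x a)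
    = (\<Sum>i\<in>UNIV. \<Sum>n\<le>N. \<Sum>x\<in>UNIV. \<Sum>a\<in>UNIV.
         (1 / t) * ((L i n x a - rho t i n x a) * G i n x a) - (1 / t) * ((L i n x a - rho t i n x a) * r_mu t i n x a))"
    unfolding G_def by (intro sum.cong refl) simp
  moreover have "\<dots> = (1 / t) * (\<Sum>i\<in>UNIV. \<Sum>n\<le>N. \<Sum>x\<in>UNIV. \<Sum>a\<in>UNIV. (L i n x a - rho t i n x a) * G i n x a)
      - (1 / t) * (\<Sum>i\<in>UNIV. \<Sum>n\<le>N. \<Sum>x\<in>UNIV. \<Sum>a\<in>UNIV. (L i n x a - rho t i n x a) * r_mu t i n x a)"
    by (simp only: sum_subtractf sum_distrib_left)
  ultimately show ?thesis
    using t by (simp add: divide_nonpos_pos)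
qed

lemma exploitability_deriv_le:
  assumes t: "1 < t"
    and D: "((\<lambda>s. exploitability N mu0 P r (pol s)) has_real_derivative D) (at t within {1..})"
  shows "D \<le> - (1 / t) * exploitability N mu0 P r (pol t)"
proof -
  define \<phi> where "\<phi> s = exploitability N mu0 P r (pol s)" for s
  obtain h L where h: "h \<longlonglongrightarrow> 0" "\<And>k. 0 < h k" "\<And>k. h k \<le> t - 1"
    and lim: "\<And>i n x a. n \<le> N \<Longrightarrow> (\<lambda>k. br_avg (t - h k) t i n x a) \<longlonglongrightarrow> L i n x a"
    and L: "\<And>i. is_occupation N (mu0 i) P (L i)"
    and L_opt: "\<And>i. payoff i (L i) (mu t) = best_value i (mu t)"
    using optimal_limit_of_br_avg[OF t] by blast
  define Q where "Q k = (\<Sum>i\<in>UNIV. \<Sum>n\<le>N. \<Sum>x\<in>UNIV. \<Sum>a\<in>UNIV.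
      (L i n x a - rho (t - h k) i n x a) * ((r_mu t i n x a - r_mu (t - h k) i n x a) / h k)
      - (1 / t) * (br_avg (t - h k) t i n x a - rho (t - h k) i n x a) * r_mu t i n x a)" for k
  have "(\<lambda>k. t - h k) \<longlonglongrightarrow> t" using tendsto_diff[OF tendsto_const h(1)] by simp
  moreover have "t - h k \<in> {1..} \<and> t - h k \<noteq> t" for k using h(2,3)[of k] by auto
  then have "\<forall>\<^sub>F k in sequentially. t - h k \<in> {1..} \<and> t - h k \<noteq> t" by simp
  ultimately have "filterlim (\<lambda>k. t - h k) (at t within {1..}) sequentially"
    unfolding filterlim_at by blast
  moreover have "((\<lambda>s. (\<phi> s - \<phi> t) / (s - t)) \<longlongrightarrow> D) (at t within {1..})"
    using D unfolding has_field_derivative_iff \<phi>_def .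
  ultimately have "(\<lambda>k. (\<phi> (t - h k) - \<phi> t) / (t - h k - t)) \<longlonglongrightarrow> D"
    by (rule filterlim_compose[rotated])
  moreover have "(\<phi> (t - h k) - \<phi> t) / (t - h k - t) = (\<phi> t - \<phi> (t - h k)) / h k" for k
    using h(2)[of k] by (simp add: field_simps)
  ultimately have quot: "(\<lambda>k. (\<phi> t - \<phi> (t - h k)) / h k) \<longlonglongrightarrow> D" by simp
  have "(\<phi> t - \<phi> (t - h k)) / h k \<le> Q k" for k
    using exploitability_quotient_le[OF _ _ L L_opt, of "t - h k"] h(2,3)[of k]
    unfolding \<phi>_def Q_def by simp
  moreover have "Q \<longlonglongrightarrow> (\<Sum>i\<in>UNIV. \<Sum>n\<le>N. \<Sum>x\<in>UNIV. \<Sum>a\<in>UNIV.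
      (L i n x a - rho t i n x a) * (reward_grad i x a (profile_vec (\<lambda>j. mu t j n))
         \<bullet> ((1 / t) *\<^sub>R (profile_vec (\<lambda>j y. \<Sum>b\<in>UNIV. L j n y b) - profile_vec (\<lambda>j. mu t j n))))
      - (1 / t) * (L i n x a - rho t i n x a) * r_mu t i n x a)"
    unfolding Q_def
    by (intro tendsto_sum tendsto_diff tendsto_mult tendsto_const lim rho_tendsto_left[OF h]
        reward_quotient_tendsto[OF h lim]) auto
  ultimately have "D \<le> (\<Sum>i\<in>UNIV. \<Sum>n\<le>N. \<Sum>x\<in>UNIV. \<Sum>a\<in>UNIV.
      (L i n x a - rho t i n x a) * (reward_grad i x a (profile_vec (\<lambda>j. mu t j n))
         \<bullet> ((1 / t) *\<^sub>R (profile_vec (\<lambda>j y. \<Sum>b\<in>UNIV. L j n y b) - profile_vec (\<lambda>j. mu t j n))))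
      - (1 / t) * (L i n x a - rho t i n x a) * r_mu t i n x a)"
    using LIMSEQ_le[OF quot] by blast
  also have "\<dots> \<le> - (1 / t) * exploitability N mu0 P r (pol t)"
    using quotient_bound_limit_le[OF _ L L_opt] t by simp
  finally show ?thesis .
qed

end

theorem theorem1:
  fixes N :: nat
    and mu0 :: "'p::finite \<Rightarrow> 'x::finite \<Rightarrow> real"
    and P :: "'x \<Rightarrow> 'a::finite \<Rightarrow> 'x \<Rightarrow> real"
    and r :: "'p \<Rightarrow> 'x \<Rightarrow> 'a \<Rightarrow> ('p \<Rightarrow> 'x \<Rightarrow> real) \<Rightarrow> real"
    and pibr :: "real \<Rightarrow> 'p \<Rightarrow> nat \<Rightarrow> 'x \<Rightarrow> 'a \<Rightarrow> real"
    and pol :: "real \<Rightarrow> 'p \<Rightarrow> nat \<Rightarrow> 'x \<Rightarrow> 'a \<Rightarrow> real"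
  assumes init: "\<forall>i. is_dist (mu0 i)"
    and trans: "\<forall>x a. is_dist (P x a)"
    and mono: "weakly_monotone r"
    and C1: "\<forall>i x a. C1_on (\<lambda>m::real ^ 'x ^ 'p. r i x a (vec_to_fun m)) simplex_profiles"
    and unif: "\<forall>s\<in>{0..<1}. \<forall>i n x a. pibr s i n x a = 1 / real CARD('a)"
    and br: "\<forall>t\<ge>1. \<forall>i. is_policy N (pibr t i) \<and>
               (\<forall>pol'. is_policy N pol' \<longrightarrow>
                  J N (mu0 i) P (r i) pol' (fp_mu mu0 P pibr t)
                    \<le> J N (mu0 i) P (r i) (pibr t i) (fp_mu mu0 P pibr t))"
    and meas: "\<forall>i n x a. set_borel_measurable borel {0..} (\<lambda>s. pibr s i n x a)"
    and pol_pos: "\<forall>t\<ge>1. \<forall>i n x a. fp_mu mu0 P pibr t i n x > 0 \<longrightarrow>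
               pol t i n x a = fp_rho mu0 P pibr t i n x a / fp_mu mu0 P pibr t i n x"
    and pol_dist: "\<forall>t\<ge>1. \<forall>i n x. is_dist (pol t i n x)"
    and diff: "(\<lambda>t. exploitability N mu0 P r (pol t)) differentiable_on {1..}"
  shows "(\<forall>t D. 1 \<le> t \<longrightarrow>
            ((\<lambda>t. exploitability N mu0 P r (pol t)) has_real_derivative D) (at t within {1..}) \<longrightarrow>
            D \<le> - (1 / t) * exploitability N mu0 P r (pol t))
       \<and> (\<forall>t\<ge>1. exploitability N mu0 P r (pol t) \<le> exploitability N mu0 P r (pol 1) / t)"
proof -
  interpret fictitious_play N mu0 P r pibr pol
    using init trans mono C1 unif br meas pol_pos by unfold_locales
  let ?\<phi> = "\<lambda>t. exploitability N mu0 P r (pol t)"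
  have decay: "v * ?\<phi> v \<le> u * ?\<phi> u" if "1 \<le> u" "u \<le> v" for u v
    using mult_antimono_of_deriv_bound[OF _ diff exploitability_deriv_le that] by simp
  have "D \<le> - (1 / t) * ?\<phi> t" if "1 \<le> t" "(?\<phi> has_real_derivative D) (at t within {1..})" for t D
  proof (cases "t = 1")
    case True
    then show ?thesis using deriv_bound_at_left_endpoint[of 1 ?\<phi> D] decay[of 1] that by simp
  qed (use that exploitability_deriv_le in simp)
  moreover have "?\<phi> t \<le> ?\<phi> 1 / t" if "1 \<le> t" for t
    using decay[of 1 t] that by (simp add: field_simps)
  ultimately show ?thesis by blast
qed

end
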